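(* For two finite subsets $D_1, D_2 \subset \mathbb{N}$, \[ \alpha(D_1 \cup D_2) \geq \alpha(D_1)\,\alpha(D_2). \]
   Context: For a finite $D \subset \mathbb{N} = \{1,2,\ldots\}$ and $n \geq 1$, the circulant graph $G_n$ with set of distances $D$ has vertex set $\{0, \ldots, n-1\}$, vertices $u, v$ (possibly equal) being adjacent iff $u - v \equiv d$ or $v - u \equiv d \pmod n$ for some $d \in D$. $\alpha(G)$ is the maximum size of an independent set (no two adjacent vertices, no looped vertex), and $\alpha(D) := \lim_{n\to\infty} \alpha(G_n)/n$ (which exists). *)

theory Defs
  imports Complex_Main
begin

definition circ_adj :: "nat set \<Rightarrow> nat \<Rightarrow> nat \<Rightarrow> nat \<Rightarrow> bool" where
  "circ_adj D n u v \<longleftrightarrow>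
     (\<exists>d\<in>D. (int u - int v) mod int n = int d mod int n \<or> (int v - int u) mod int n = int d mod int n)"

text \<open>Independent set: no two (possibly equal) vertices adjacent, so no looped vertex.\<close>
definition circ_indep :: "nat set \<Rightarrow> nat \<Rightarrow> nat set \<Rightarrow> bool" where
  "circ_indep D n S \<longleftrightarrow> S \<subseteq> {0..<n} \<and> (\<forall>u\<in>S. \<forall>v\<in>S. \<not> circ_adj D n u v)"

definition circ_alpha :: "nat set \<Rightarrow> nat \<Rightarrow> nat" where
  "circ_alpha D n = Max (card ` {S. circ_indep D n S})"

definition alpha_dist :: "nat set \<Rightarrow> real" where
  "alpha_dist D = lim (\<lambda>n. real (circ_alpha D n) / real n)"

end

theory Submission
  imports Defs "HOL-Number_Theory.Cong"
begin

(* The independence number of the distance graph on the path 0, ..., n - 1 is subadditive in n,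
   so by Fekete's lemma its density converges; the circulant graph G_n differs from it only by
   the edges wrapping around, which cost at most max D vertices, so alpha(D) exists and equals
   that limit.  For the product bound use the coprime moduli n and n + 1: by the Chinese
   remainder theorem x \<mapsto> (x mod n, x mod (n + 1)) identifies {0..<n(n + 1)} with
   {0..<n} \<times> {0..<n + 1}, and since reduction mod n and mod n + 1 preserves adjacency, the
   preimage of A \<times> B, for A independent in G_n for D1 and B independent in G_(n+1) for D2, is
   independent in G_(n(n+1)) for D1 \<union> D2.  Divide by n(n + 1) and let n tend to infinity. *)

lemma subadditive_mult_add:
  fixes b :: "nat \<Rightarrow> nat"
  assumes sub: "\<And>m n. b (m + n) \<le> b m + b n"
  shows "b (q * k + r) \<le> q * b k + b r"
proof (induction q)
  case 0
  then show ?case by simp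
next
  case (Suc q)
  have "b (Suc q * k + r) = b (k + (q * k + r))" by (simp add: algebra_simps)
  also have "\<dots> \<le> b k + b (q * k + r)" by (rule sub)
  finally show ?case using Suc by simp
qed

lemma fekete_subadditive:
  fixes b :: "nat \<Rightarrow> nat"
  assumes sub: "\<And>m n. b (m + n) \<le> b m + b n"
  shows "(\<lambda>n. real (b n) / real n) \<longlonglongrightarrow> (INF n\<in>{1..}. real (b n) / real n)"
    (is "?f \<longlonglongrightarrow> ?L")
proof (rule LIMSEQ_I)
  fix r :: real assume "0 < r"
  have bdd: "bdd_below (?f ` {1..})" by (rule bdd_belowI[of _ 0]) auto
  obtain k where k: "k \<ge> 1" "?f k < ?L + r / 2"
    using cInf_lessD[of "?f ` {1..}" "?L + r / 2"] \<open>0 < r\<close> by auto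
  define C where "C = real (Max (b ` {..<k}))"
  have rem: "real (b (n mod k)) \<le> C" for n
    using k(1) by (auto simp: C_def intro: Max_ge)
  have "C \<ge> 0" by (simp add: C_def)
  obtain N where N: "\<forall>n\<ge>N. C / real n < r / 2"
    using LIMSEQ_D[OF lim_const_over_n[of C], of "r / 2"] \<open>0 < r\<close> \<open>C \<ge> 0\<close> by auto
  have "\<bar>?f n - ?L\<bar> < r" if "n \<ge> max 1 N" for n
  proof -
    have n: "real n > 0" using that by simp
    have "b n = b (n div k * k + n mod k)" by simp
    also have "\<dots> \<le> n div k * b k + b (n mod k)" by (rule subadditive_mult_add[OF sub])
    finally have "real (b n) \<le> real (n div k) * real (b k) + C"
      using rem[of n] by (metis of_nat_add of_nat_le_iff of_nat_mult add_left_mono order_trans)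
    also have "\<dots> \<le> real n / real k * real (b k) + C"
      by (intro add_right_mono mult_right_mono of_nat_div_le_of_nat) auto
    finally have "?f n \<le> ?f k + C / real n"
      using n by (simp add: field_simps)
    moreover have "?L \<le> ?f n" using bdd that by (auto intro: cInf_lower)
    moreover have "C / real n < r / 2" using N that by simp
    ultimately show ?thesis using k(2) by linarith
  qed
  then show "\<exists>no. \<forall>n\<ge>no. norm (?f n - ?L) < r"
    by (metis real_norm_def)
qed

lemma card_le_Max_card:
  assumes "F \<subseteq> Pow A" "finite A" "S \<in> F"
  shows "card S \<le> Max (card ` F)"
  using assms by (intro Max_ge finite_imageI) (auto intro: finite_subset)

lemma Max_card_attained:
  assumes "F \<subseteq> Pow A" "finite A" "{} \<in> F"
  obtains S where "S \<in> F" "card S = Max (card ` F)"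
proof -
  have "Max (card ` F) \<in> card ` F"
    using assms by (intro Max_in finite_imageI) (auto intro: finite_subset)
  then show thesis using that by (metis imageE)
qed

lemma circ_indep_card_le:
  "circ_indep D n S \<Longrightarrow> card S \<le> circ_alpha D n"
  unfolding circ_alpha_def by (rule card_le_Max_card[of _ "{0..<n}"]) (fastforce simp: circ_indep_def)+

lemma circ_alpha_attained:
  obtains S where "circ_indep D n S" "card S = circ_alpha D n"
proof (rule Max_card_attained)
  show "{S. circ_indep D n S} \<subseteq> Pow {0..<n}" by (auto simp: circ_indep_def)
  show "{} \<in> {S. circ_indep D n S}" by (simp add: circ_indep_def)
qed (use that in \<open>auto simp: circ_alpha_def\<close>)

definition path_indep :: "nat set \<Rightarrow> nat \<Rightarrow> nat set \<Rightarrow> bool" where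
  "path_indep D n S \<longleftrightarrow> S \<subseteq> {0..<n} \<and> (\<forall>u\<in>S. \<forall>v\<in>S. \<forall>d\<in>D. u \<noteq> v + d)"

definition path_alpha :: "nat set \<Rightarrow> nat \<Rightarrow> nat" where
  "path_alpha D n = Max (card ` {S. path_indep D n S})"

lemma path_indep_card_le:
  "path_indep D n S \<Longrightarrow> card S \<le> path_alpha D n"
  unfolding path_alpha_def by (rule card_le_Max_card[of _ "{0..<n}"]) (fastforce simp: path_indep_def)+

lemma path_alpha_attained:
  obtains S where "path_indep D n S" "card S = path_alpha D n"
proof (rule Max_card_attained)
  show "{S. path_indep D n S} \<subseteq> Pow {0..<n}" by (auto simp: path_indep_def)
  show "{} \<in> {S. path_indep D n S}" by (simp add: path_indep_def)
qed (use that in \<open>auto simp: path_alpha_def\<close>)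

lemma path_alpha_le: "path_alpha D n \<le> n"
proof -
  obtain S where "path_indep D n S" "card S = path_alpha D n"
    by (rule path_alpha_attained)
  then show ?thesis
    unfolding path_indep_def by (metis card_atLeastLessThan card_mono finite_atLeastLessThan diff_zero)
qed

lemma path_indep_shift:
  assumes "path_indep D (m + n) S"
  shows "path_indep D n ((\<lambda>x. x - m) ` (S \<inter> {m..}))"
  unfolding path_indep_def
proof safe
  fix x assume "x \<in> S" "m \<le> x"
  moreover from this have "x < m + n" using assms unfolding path_indep_def by auto
  ultimately show "x - m \<in> {0..<n}" by simp
next
  fix u v d assume "u \<in> S" "m \<le> u" "v \<in> S" "m \<le> v" "d \<in> D" "u - m = v - m + d"
  moreover from this have "u = v + d" by linarith
  ultimately show False using assms unfolding path_indep_def by blast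
qed

lemma path_alpha_add: "path_alpha D (m + n) \<le> path_alpha D m + path_alpha D n"
proof -
  obtain S where S: "path_indep D (m + n) S" "card S = path_alpha D (m + n)"
    by (rule path_alpha_attained)
  let ?A = "S \<inter> {..<m}" and ?B = "S \<inter> {m..}"
  have "finite S" using S(1) finite_subset unfolding path_indep_def by blast
  have "card S = card (?A \<union> ?B)" by (rule arg_cong[where f = card]) auto
  also have "\<dots> = card ?A + card ?B"
    using \<open>finite S\<close> by (intro card_Un_disjoint) auto
  finally have "card S = card ?A + card ?B" .
  moreover have "card ?A \<le> path_alpha D m"
    using S(1) by (intro path_indep_card_le) (auto simp: path_indep_def)
  moreover have "card ?B = card ((\<lambda>x. x - m) ` ?B)"
    by (rule card_image[symmetric]) (auto simp: inj_on_def)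
  moreover have "\<dots> \<le> path_alpha D n"
    by (intro path_indep_card_le path_indep_shift S(1))
  ultimately show ?thesis using S(2) by linarith
qed

lemma circ_indep_imp_path_indep:
  assumes "circ_indep D n S"
  shows "path_indep D n S"
proof -
  have "circ_adj D n (v + d) v" if "d \<in> D" for v d
    using that unfolding circ_adj_def by force
  then show ?thesis using assms unfolding circ_indep_def path_indep_def by blast
qed

lemma circ_alpha_le_path_alpha: "circ_alpha D n \<le> path_alpha D n"
  by (metis circ_alpha_attained circ_indep_imp_path_indep path_indep_card_le)

lemma path_indep_imp_circ_indep:
  assumes D: "\<forall>d\<in>D. 0 < d \<and> d \<le> m" and S: "path_indep D (n - m) S"
  shows "circ_indep D n S"
proof -
  have no_diff: "(int u - int v) mod int n \<noteq> int d mod int n" if "u \<in> S" "v \<in> S" "d \<in> D" for u v d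
  proof
    assume "(int u - int v) mod int n = int d mod int n"
    then have "int n dvd int u - int v - int d" by (simp add: mod_eq_dvd_iff)
    moreover have "u < n - m" "v < n - m" "0 < d" "d \<le> m"
      using that S D unfolding path_indep_def by auto
    then have "\<bar>int u - int v - int d\<bar> < int n" by linarith
    ultimately have "u = v + d" using dvd_imp_le_int[of "int u - int v - int d"] by fastforce
    then show False using that S unfolding path_indep_def by blast
  qed
  then have "\<not> circ_adj D n u v" if "u \<in> S" "v \<in> S" for u v
    using that unfolding circ_adj_def by blast
  moreover have "S \<subseteq> {0..<n}" using S unfolding path_indep_def by auto
  ultimately show ?thesis unfolding circ_indep_def by blast
qed

lemma path_alpha_le_circ_alpha_add:
  assumes "\<forall>d\<in>D. 0 < d \<and> d \<le> m"
  shows "path_alpha D n \<le> circ_alpha D n + m"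
proof (cases "m \<le> n")
  case True
  obtain S where S: "path_indep D (n - m) S" "card S = path_alpha D (n - m)"
    by (rule path_alpha_attained)
  have "path_alpha D n \<le> path_alpha D (n - m) + path_alpha D m"
    using path_alpha_add[of D "n - m" m] True by simp
  also have "path_alpha D (n - m) \<le> circ_alpha D n"
    using S path_indep_imp_circ_indep[OF assms] circ_indep_card_le by metis
  finally show ?thesis using path_alpha_le[of D m] by linarith
next
  case False
  then show ?thesis using path_alpha_le[of D n] by linarith
qed

lemma circ_alpha_density_tendsto:
  assumes "finite D" "0 \<notin> D"
  shows "(\<lambda>n. real (circ_alpha D n) / real n) \<longlonglongrightarrow> alpha_dist D"
proof -
  define m where "m = Max (insert 0 D)"
  have D: "\<forall>d\<in>D. 0 < d \<and> d \<le> m"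
    using assms unfolding m_def by (metis Max_ge finite_insert insertCI neq0_conv)
  define L where "L = (INF n\<in>{1..}. real (path_alpha D n) / real n)"
  have path: "(\<lambda>n. real (path_alpha D n) / real n) \<longlonglongrightarrow> L"
    unfolding L_def by (intro fekete_subadditive path_alpha_add)
  have "(\<lambda>n. real (path_alpha D n) / real n - real m / real n) \<longlonglongrightarrow> L - 0"
    by (intro tendsto_diff path lim_const_over_n)
  then have lower: "(\<lambda>n. real (path_alpha D n) / real n - real m / real n) \<longlonglongrightarrow> L"
    by simp
  have "real (path_alpha D n) / real n - real m / real n \<le> real (circ_alpha D n) / real n" for n
  proof -
    have "(real (path_alpha D n) - real m) / real n \<le> real (circ_alpha D n) / real n"
      using path_alpha_le_circ_alpha_add[OF D, of n] by (intro divide_right_mono) auto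
    then show ?thesis by (simp add: diff_divide_distrib)
  qed
  moreover have "real (circ_alpha D n) / real n \<le> real (path_alpha D n) / real n" for n
    using circ_alpha_le_path_alpha[of D n] by (intro divide_right_mono) auto
  ultimately have circ: "(\<lambda>n. real (circ_alpha D n) / real n) \<longlonglongrightarrow> L"
    by (intro tendsto_sandwich[OF _ _ lower path] always_eventually allI)
  moreover from circ have "alpha_dist D = L" unfolding alpha_dist_def by (rule limI)
  ultimately show ?thesis by simp
qed

lemma circ_adj_mod:
  assumes "k dvd N" "circ_adj D N u v"
  shows "circ_adj D k (u mod k) (v mod k)"
proof -
  have "x mod int k = y mod int k" if "x mod int N = y mod int N" for x y :: int
    using that mod_mod_cancel[of "int k" "int N"] assms(1) by (metis of_nat_dvd_iff)
  moreover have "(int (a mod k) - int (b mod k)) mod int k = (int a - int b) mod int k" for a b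
    by (simp add: of_nat_mod mod_diff_eq)
  ultimately show ?thesis using assms(2) unfolding circ_adj_def by metis
qed

lemma circ_indep_vimage_mod:
  assumes "k dvd N" "circ_indep D k S"
  shows "circ_indep D N {x \<in> {0..<N}. x mod k \<in> S}"
  using assms circ_adj_mod unfolding circ_indep_def by blast

lemma circ_indep_Int:
  "circ_indep D1 n A \<Longrightarrow> circ_indep D2 n B \<Longrightarrow> circ_indep (D1 \<union> D2) n (A \<inter> B)"
  unfolding circ_indep_def circ_adj_def by blast

lemma bij_betw_mod_pair:
  fixes m n :: nat
  assumes "coprime m n" "m \<noteq> 0" "n \<noteq> 0"
  shows "bij_betw (\<lambda>x. (x mod m, x mod n)) {0..<m * n} ({0..<m} \<times> {0..<n})"
proof (rule bij_betwI')
  fix x y assume "x \<in> {0..<m * n}" "y \<in> {0..<m * n}"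
  then show "((x mod m, x mod n) = (y mod m, y mod n)) = (x = y)"
    using coprime_cong_mult_nat[of x y m n] cong_less_modulus_unique_nat[of x y "m * n"] assms(1)
    by (auto simp: cong_def)
next
  fix x show "(x mod m, x mod n) \<in> {0..<m} \<times> {0..<n}" using assms(2,3) by simp
next
  fix p assume p: "p \<in> {0..<m} \<times> {0..<n}"
  obtain x where "x < m * n" "[x = fst p] (mod m)" "[x = snd p] (mod n)"
    using binary_chinese_remainder_unique_nat[OF assms] by blast
  then show "\<exists>x\<in>{0..<m * n}. p = (x mod m, x mod n)" using p by (auto simp: cong_def)
qed

lemma card_mod_pair_vimage:
  fixes m n :: nat
  assumes "coprime m n" "A \<subseteq> {0..<m}" "B \<subseteq> {0..<n}"
  shows "card {x \<in> {0..<m * n}. x mod m \<in> A \<and> x mod n \<in> B} = card A * card B"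
proof (cases "m = 0 \<or> n = 0")
  case True
  then have "A = {} \<or> B = {}" using assms(2,3) by auto
  then show ?thesis using True by auto
next
  case False
  define f where "f x = (x mod m, x mod n)" for x
  let ?S = "{x \<in> {0..<m * n}. f x \<in> A \<times> B}"
  have bij: "bij_betw f {0..<m * n} ({0..<m} \<times> {0..<n})"
    unfolding f_def using assms(1) False by (intro bij_betw_mod_pair) auto
  have image: "f ` ?S = A \<times> B"
  proof
    show "A \<times> B \<subseteq> f ` ?S"
    proof
      fix p assume p: "p \<in> A \<times> B"
      then have "p \<in> f ` {0..<m * n}"
        using assms(2,3) bij_betw_imp_surj_on[OF bij] by blast
      then obtain x where "x \<in> {0..<m * n}" "p = f x" by blast
      then show "p \<in> f ` ?S" using p by (intro image_eqI[of p f x]) auto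
    qed
  qed blast
  have "inj_on f ?S"
    by (rule inj_on_subset[OF bij_betw_imp_inj_on[OF bij]]) auto
  then have "card ?S = card (A \<times> B)"
    by (subst image[symmetric]) (rule card_image[symmetric])
  moreover have "?S = {x \<in> {0..<m * n}. x mod m \<in> A \<and> x mod n \<in> B}"
    by (simp add: f_def)
  ultimately show ?thesis by (simp add: card_cartesian_product)
qed

lemma circ_alpha_mult_coprime:
  assumes "coprime m n"
  shows "circ_alpha D1 m * circ_alpha D2 n \<le> circ_alpha (D1 \<union> D2) (m * n)"
proof -
  obtain A where A: "circ_indep D1 m A" "card A = circ_alpha D1 m"
    by (rule circ_alpha_attained)
  obtain B where B: "circ_indep D2 n B" "card B = circ_alpha D2 n"
    by (rule circ_alpha_attained)
  let ?S = "{x \<in> {0..<m * n}. x mod m \<in> A \<and> x mod n \<in> B}"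
  have "?S = {x \<in> {0..<m * n}. x mod m \<in> A} \<inter> {x \<in> {0..<m * n}. x mod n \<in> B}" by blast
  then have "circ_indep (D1 \<union> D2) (m * n) ?S"
    using A(1) B(1) by (simp only: circ_indep_Int circ_indep_vimage_mod dvd_triv_left dvd_triv_right)
  then have "card ?S \<le> circ_alpha (D1 \<union> D2) (m * n)" by (rule circ_indep_card_le)
  moreover have "card ?S = card A * card B"
    using assms A(1) B(1) by (intro card_mod_pair_vimage) (auto simp: circ_indep_def)
  ultimately show ?thesis using A(2) B(2) by simp
qed

lemma circ_alpha_density_mult_coprime:
  assumes "coprime m n"
  shows "real (circ_alpha D1 m) / real m * (real (circ_alpha D2 n) / real n)
    \<le> real (circ_alpha (D1 \<union> D2) (m * n)) / real (m * n)"
proof -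
  have "real (circ_alpha D1 m) * real (circ_alpha D2 n) \<le> real (circ_alpha (D1 \<union> D2) (m * n))"
    using circ_alpha_mult_coprime[OF assms] by (metis of_nat_le_iff of_nat_mult)
  then show ?thesis
    by (metis divide_right_mono of_nat_0_le_iff of_nat_mult times_divide_times_eq)
qed

theorem proposition5:
  fixes D1 D2 :: "nat set"
  assumes "finite D1" and "0 \<notin> D1" and "finite D2" and "0 \<notin> D2"
  shows "alpha_dist (D1 \<union> D2) \<ge> alpha_dist D1 * alpha_dist D2"
proof -
  let ?a = "\<lambda>D n. real (circ_alpha D n) / real n"
  have "(\<lambda>n. ?a D1 n * ?a D2 (Suc n)) \<longlonglongrightarrow> alpha_dist D1 * alpha_dist D2"
    using assms by (intro tendsto_mult LIMSEQ_Suc circ_alpha_density_tendsto)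
  moreover have "strict_mono (\<lambda>n::nat. n * Suc n)"
    unfolding strict_mono_Suc_iff by simp
  then have "(\<lambda>n. ?a (D1 \<union> D2) (n * Suc n)) \<longlonglongrightarrow> alpha_dist (D1 \<union> D2)"
    using LIMSEQ_subseq_LIMSEQ[OF circ_alpha_density_tendsto[of "D1 \<union> D2"]] assms
    unfolding comp_def by blast
  moreover have "?a D1 n * ?a D2 (Suc n) \<le> ?a (D1 \<union> D2) (n * Suc n)" for n
    by (rule circ_alpha_density_mult_coprime) simp
  ultimately show ?thesis by (intro LIMSEQ_le) auto
qed

end
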